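(* Let $\Omega=\mathbb{C}[x_1,\dots,x_n]\otimes\wedge\mathbb{C}^n$ and let $\mathcal{I}_n$ be its ideal generated by $p_1,\dots,p_n,dp_1,\dots,dp_n$, where $p_j=\sum_ix_i^j$ and $d$ is the exterior derivative. Let $1\le r\le n$. If $f\in\mathbb{C}[x_r,\dots,x_n]$ is homogeneous of degree $l>(r-2)(n-r+1)$, then $f\,dx_r\wedge\cdots\wedge dx_n\in\mathcal{I}_n$. *)

theory Defs
  imports Complex_Main "HOL-Library.Poly_Mapping"
begin

text \<open>Polynomials in countably many variables x_i (i :: nat) over the complex numbers:
  a monomial is an exponent vector (finitely supported nat-valued map), a polynomial a finitely supported
  coefficient map.\<close>
type_synonym mpoly = "(nat \<Rightarrow>\<^sub>0 nat) \<Rightarrow>\<^sub>0 complex"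

text \<open>A polynomial differential form: the coefficient of dx_S (S a finite set of indices,
  dx_S = dx_{s1} wedge ... wedge dx_{sk} with s1 < ... < sk) is given by the function value at S.\<close>
type_synonym pform = "nat set \<Rightarrow> mpoly"

definition var :: "nat \<Rightarrow> mpoly" where
  "var i = Poly_Mapping.single (Poly_Mapping.single i 1) 1"

definition pdiff :: "nat \<Rightarrow> mpoly \<Rightarrow> mpoly" where
  "pdiff i f = (\<Sum>(m::nat \<Rightarrow>\<^sub>0 nat)\<in>Poly_Mapping.keys f. Poly_Mapping.single (m - Poly_Mapping.single i 1)
                                 (of_nat (Poly_Mapping.lookup m i) * Poly_Mapping.lookup f m :: complex))"

text \<open>Sign of dx_S wedge dx_T, rewritten in increasing order (number of inversions).\<close>
definition wsign :: "nat set \<Rightarrow> nat set \<Rightarrow> int" where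
  "wsign S T = (-1) ^ card {(s,t). s \<in> S \<and> t \<in> T \<and> t < s}"

definition wedge :: "pform \<Rightarrow> pform \<Rightarrow> pform" where
  "wedge \<omega> \<eta> U = (\<Sum>S\<in>Pow U. of_int (wsign S (U - S)) * \<omega> S * \<eta> (U - S))"

definition ext_d :: "pform \<Rightarrow> pform" where
  "ext_d \<omega> U = (\<Sum>i\<in>U. of_int (wsign {i} (U - {i})) * pdiff i (\<omega> (U - {i})))"

definition zero_form :: "mpoly \<Rightarrow> pform" where
  "zero_form f = (\<lambda>S. if S = {} then f else 0)"

definition Omega :: "nat \<Rightarrow> pform set" where
  "Omega n = {\<omega>. \<forall>S. \<omega> S \<noteq> 0 \<longrightarrow> S \<subseteq> {1..n} \<and> (\<forall>m\<in>Poly_Mapping.keys (\<omega> S). Poly_Mapping.keys m \<subseteq> {1..n})}"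

inductive_set gen_ideal :: "nat \<Rightarrow> pform set \<Rightarrow> pform set" for n G where
  gen: "g \<in> G \<Longrightarrow> g \<in> gen_ideal n G"
| zero: "(\<lambda>U. 0) \<in> gen_ideal n G"
| add: "a \<in> gen_ideal n G \<Longrightarrow> b \<in> gen_ideal n G \<Longrightarrow> (\<lambda>U. a U + b U) \<in> gen_ideal n G"
| lmult: "a \<in> gen_ideal n G \<Longrightarrow> \<omega> \<in> Omega n \<Longrightarrow> wedge \<omega> a \<in> gen_ideal n G"
| rmult: "a \<in> gen_ideal n G \<Longrightarrow> \<omega> \<in> Omega n \<Longrightarrow> wedge a \<omega> \<in> gen_ideal n G"

definition power_sum :: "nat \<Rightarrow> nat \<Rightarrow> mpoly" where
  "power_sum n j = (\<Sum>i=1..n. var i ^ j)"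

definition I_n :: "nat \<Rightarrow> pform set" where
  "I_n n = gen_ideal n ((\<lambda>j. zero_form (power_sum n j)) ` {1..n}
                      \<union> (\<lambda>j. ext_d (zero_form (power_sum n j))) ` {1..n})"

definition homogeneous_in :: "nat set \<Rightarrow> nat \<Rightarrow> mpoly \<Rightarrow> bool" where
  "homogeneous_in V l f \<longleftrightarrow> (\<forall>m\<in>Poly_Mapping.keys f. Poly_Mapping.keys m \<subseteq> V \<and> (\<Sum>i\<in>Poly_Mapping.keys m. Poly_Mapping.lookup m i) = l)"

end

(*
  Write Y = {r..n}, h_k(Y) for the complete homogeneous symmetric polynomial of degree k in the
  variables x_r, ..., x_n, and P for the polynomial ideal generated by the power sums p_1, ..., p_n.

  Newton's identities put h_d(x_1, ..., x_n) into P for 1 <= d <= n, and the recursion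
  h_d(x_(t+1), ..., x_n) = h_d(x_t, ..., x_n) - x_t h_(d-1)(x_t, ..., x_n) then gives h_r(Y) in P.
  Since g in P implies that both g and dg lie in I_n, the product dh_r(Y) wedge dx_(Y - {i}) shows
  that (d_i h_r(Y)) dx_Y lies in I_n for every i in Y.

  It remains to see that the ideal of C[x_Y] generated by the partial derivatives
  d_i h_r(Y) = h_(r-1)(x_i, Y) contains every monomial of degree > (r-2)|Y|. This is an induction
  over weights kappa_i, where h_k(x_i, Y) with kappa_i <= k + 1 <= r are the generators and
  monomials of degree > sum_i (kappa_i - 2) are reached: raising the largest weight kappa_j costs
  one factor x_j because
  x_j h_k(x_j, Y) = h_(k+1)(x_j, Y) - h_(k+1)(Y)  and  sum_i h_(k+1)(x_i, Y) = (|Y| + k + 1) h_(k+1)(Y),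
  and monomials free of x_j are handled by the induction hypothesis for Y - {x_j}.
*)

theory Submission
  imports Defs "HOL-Library.Multiset"
begin

section \<open>Polynomials: variables, degree and partial derivatives\<close>

definition vars :: "mpoly \<Rightarrow> nat set" where
  "vars p = (\<Union>m\<in>Poly_Mapping.keys p. Poly_Mapping.keys m)"

definition monom_deg :: "(nat \<Rightarrow>\<^sub>0 nat) \<Rightarrow> nat" where
  "monom_deg a = (\<Sum>i\<in>Poly_Mapping.keys a. Poly_Mapping.lookup a i)"

lemma keys_add_nat: "Poly_Mapping.keys (a + b) = Poly_Mapping.keys a \<union> Poly_Mapping.keys (b :: nat \<Rightarrow>\<^sub>0 nat)"
  by (auto simp: in_keys_iff lookup_add)

lemma keys_diff_nat: "Poly_Mapping.keys (a - b) \<subseteq> Poly_Mapping.keys (a :: nat \<Rightarrow>\<^sub>0 nat)"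
  by (auto simp: in_keys_iff lookup_minus)

lemma single_add_diff_single:
  "Poly_Mapping.lookup a j \<noteq> 0 \<Longrightarrow> Poly_Mapping.single j 1 + (a - Poly_Mapping.single j 1) = (a :: nat \<Rightarrow>\<^sub>0 nat)"
  by (intro poly_mapping_eqI) (auto simp: lookup_add lookup_minus lookup_single when_def)

lemma keys_single_mult:
  assumes "b \<in> Poly_Mapping.keys (Poly_Mapping.single a c * g)"
  shows "\<exists>b'. b = a + b' \<and> b' \<in> Poly_Mapping.keys (g :: mpoly)"
proof -
  from assms keys_mult obtain a' b' where "b = a' + b'" "a' \<in> Poly_Mapping.keys (Poly_Mapping.single a c)"
    "b' \<in> Poly_Mapping.keys g"
    by blast
  then show ?thesis
    by (auto split: if_splits)
qed

lemma monom_deg_superset: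
  "finite K \<Longrightarrow> Poly_Mapping.keys a \<subseteq> K \<Longrightarrow> monom_deg a = (\<Sum>i\<in>K. Poly_Mapping.lookup a i)"
  unfolding monom_deg_def by (rule sum.mono_neutral_left) (auto simp: in_keys_iff)

lemma monom_deg_add: "monom_deg (a + b) = monom_deg a + monom_deg b"
proof -
  let ?K = "Poly_Mapping.keys a \<union> Poly_Mapping.keys b"
  have "monom_deg (a + b) = (\<Sum>i\<in>?K. Poly_Mapping.lookup (a + b) i)"
    by (rule monom_deg_superset) (auto simp: keys_add_nat)
  also have "\<dots> = (\<Sum>i\<in>?K. Poly_Mapping.lookup a i) + (\<Sum>i\<in>?K. Poly_Mapping.lookup b i)"
    by (simp add: lookup_add sum.distrib)
  also have "\<dots> = monom_deg a + monom_deg b"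
    by (simp add: monom_deg_superset[symmetric])
  finally show ?thesis .
qed

lemma monom_deg_single [simp]: "monom_deg (Poly_Mapping.single i k) = k"
  by (simp add: monom_deg_def)

lemma monom_deg_zero [simp]: "monom_deg 0 = 0"
  by (simp add: monom_deg_def)

lemma sum_single_lookup: "(\<Sum>a\<in>Poly_Mapping.keys p. Poly_Mapping.single a (Poly_Mapping.lookup p a)) = p"
  by (rule poly_mapping_eqI) (simp add: lookup_sum lookup_single when_def in_keys_iff)

lemma single_inverse_mult_of_nat: "Poly_Mapping.single 0 (1 / of_nat (Suc k)) * (of_nat (Suc k) * p) = (p :: mpoly)"
  by (simp del: of_nat_Suc add: mult.assoc[symmetric] mult_single flip: single_of_nat)

lemma vars_add: "vars (p + q) \<subseteq> vars p \<union> vars q"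
  unfolding vars_def using keys_add[of p q] by auto

lemma vars_sum: "vars (sum F A) \<subseteq> (\<Union>x\<in>A. vars (F x))"
proof (induction A rule: infinite_finite_induct)
  case (insert x A)
  then show ?case using vars_add[of "F x" "sum F A"] by auto
qed (auto simp: vars_def)

lemma vars_single: "vars (Poly_Mapping.single a c) \<subseteq> Poly_Mapping.keys a"
  by (auto simp: vars_def)

lemma vars_var: "vars (var i) = {i}"
  by (simp add: vars_def var_def)

lemma vars_uminus [simp]: "vars (- p) = vars p"
  by (simp add: vars_def)

lemma vars_of_int [simp]: "vars (of_int k) = {}"
  using vars_single[of 0 "of_int k"] by (simp del: single_of_int add: single_of_int[symmetric])

lemma pdiff_eq_sum_superset:
  assumes "finite K" "Poly_Mapping.keys f \<subseteq> K"
  shows "pdiff i f = (\<Sum>m\<in>K. Poly_Mapping.single (m - Poly_Mapping.single i 1)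
                                 (of_nat (Poly_Mapping.lookup m i) * Poly_Mapping.lookup f m))"
  unfolding pdiff_def by (rule sum.mono_neutral_left) (use assms in \<open>auto simp: in_keys_iff\<close>)

lemma pdiff_add: "pdiff i (f + g) = pdiff i f + pdiff i g"
proof -
  let ?K = "Poly_Mapping.keys f \<union> Poly_Mapping.keys g"
  have "finite ?K" "Poly_Mapping.keys (f + g) \<subseteq> ?K"
    using keys_add[of f g] by auto
  then show ?thesis
    by (simp add: pdiff_eq_sum_superset[of ?K] lookup_add distrib_left single_add sum.distrib)
qed

lemma pdiff_zero [simp]: "pdiff i 0 = 0"
  by (simp add: pdiff_def)

lemma pdiff_sum: "pdiff i (sum F A) = (\<Sum>x\<in>A. pdiff i (F x))"
  by (induction A rule: infinite_finite_induct) (auto simp: pdiff_add)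

lemma pdiff_single: "pdiff i (Poly_Mapping.single a c) =
   Poly_Mapping.single (a - Poly_Mapping.single i 1) (of_nat (Poly_Mapping.lookup a i) * c)"
  by (subst pdiff_eq_sum_superset[of "{a}"]) auto

text \<open>Both sides vanish when \<open>x\<^sub>i\<close> does not occur in \<open>a\<close>, where the subtraction of exponents
  truncates.\<close>

lemma single_diff_single_add:
  "Poly_Mapping.single (a - Poly_Mapping.single i 1 + b) (of_nat (Poly_Mapping.lookup a i) * c) =
   Poly_Mapping.single (a + b - Poly_Mapping.single i 1) (of_nat (Poly_Mapping.lookup a i) * c :: complex)"
proof (cases "Poly_Mapping.lookup a i = 0")
  case False
  then have "a - Poly_Mapping.single i 1 + b = a + b - Poly_Mapping.single i 1"
    by (intro poly_mapping_eqI) (auto simp: lookup_add lookup_minus lookup_single when_def)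
  then show ?thesis by simp
qed simp

lemma pdiff_single_mult:
  "pdiff i (Poly_Mapping.single a c * Poly_Mapping.single b d) =
   pdiff i (Poly_Mapping.single a c) * Poly_Mapping.single b d +
   Poly_Mapping.single a c * pdiff i (Poly_Mapping.single b d)"
proof -
  let ?e = "Poly_Mapping.single i (1 :: nat)"
  let ?a = "of_nat (Poly_Mapping.lookup a i) :: complex" and ?b = "of_nat (Poly_Mapping.lookup b i) :: complex"
  have "pdiff i (Poly_Mapping.single a c * Poly_Mapping.single b d) =
        Poly_Mapping.single (a + b - ?e) (?a * (c * d)) + Poly_Mapping.single (b + a - ?e) (?b * (c * d))"
    by (simp add: pdiff_single mult_single lookup_add distrib_right single_add add.commute)
  also have "\<dots> = Poly_Mapping.single (a - ?e + b) (?a * c * d) + Poly_Mapping.single (a + (b - ?e)) (c * (?b * d))"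
    by (simp only: single_diff_single_add add.commute[of a "b - ?e"] mult.assoc mult.left_commute[of c])
  also have "\<dots> = pdiff i (Poly_Mapping.single a c) * Poly_Mapping.single b d +
                   Poly_Mapping.single a c * pdiff i (Poly_Mapping.single b d)"
    by (simp add: pdiff_single mult_single)
  finally show ?thesis .
qed

lemma pdiff_mult: "pdiff i (f * g) = pdiff i f * g + f * pdiff i g"
proof -
  let ?s = "\<lambda>p a. Poly_Mapping.single a (Poly_Mapping.lookup p a)"
  let ?F = "Poly_Mapping.keys f" and ?G = "Poly_Mapping.keys g"
  have "pdiff i (f * g) = pdiff i ((\<Sum>a\<in>?F. ?s f a) * (\<Sum>b\<in>?G. ?s g b))"
    by (simp only: sum_single_lookup)
  also have "\<dots> = (\<Sum>a\<in>?F. pdiff i (?s f a)) * (\<Sum>b\<in>?G. ?s g b) +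
                   (\<Sum>a\<in>?F. ?s f a) * (\<Sum>b\<in>?G. pdiff i (?s g b))"
    by (simp add: sum_product pdiff_sum pdiff_single_mult sum.distrib)
  also have "\<dots> = pdiff i f * g + f * pdiff i g"
    by (simp only: pdiff_sum[symmetric] sum_single_lookup)
  finally show ?thesis .
qed

lemma pdiff_var: "pdiff i (var v) = (if i = v then 1 else 0)"
  by (auto simp: var_def pdiff_single lookup_single when_def)

lemma pdiff_eq_0_if_notin_vars: "i \<notin> vars f \<Longrightarrow> pdiff i f = 0"
  unfolding pdiff_def vars_def by (rule sum.neutral) (auto simp: in_keys_iff)

lemma vars_pdiff: "vars (pdiff i f) \<subseteq> vars f"
proof -
  have "vars (pdiff i f) \<subseteq> (\<Union>m\<in>Poly_Mapping.keys f. Poly_Mapping.keys (m - Poly_Mapping.single i 1))"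
    unfolding pdiff_def by (rule order_trans[OF vars_sum]) (use vars_single in blast)
  also have "\<dots> \<subseteq> vars f"
    using keys_diff_nat unfolding vars_def by blast
  finally show ?thesis .
qed

section \<open>Complete homogeneous symmetric polynomials\<close>

text \<open>\<open>complete_hom V k\<close> is \<open>h\<^sub>k\<close> evaluated at the variables listed in \<open>V\<close>. A repeated entry
  counts as a further variable with the same value; this makes \<open>complete_hom (i # V) k\<close> the
  partial derivative of \<open>complete_hom V (Suc k)\<close> along \<open>x\<^sub>i\<close>.\<close>

fun complete_hom :: "nat list \<Rightarrow> nat \<Rightarrow> mpoly" where
  "complete_hom V 0 = 1"
| "complete_hom [] (Suc k) = 0"
| "complete_hom (v # V) (Suc k) = complete_hom V (Suc k) + var v * complete_hom (v # V) k"

lemma complete_hom_Cons_swap: "complete_hom (a # b # X) k = complete_hom (b # a # X) k"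
proof (induction k rule: less_induct)
  case (less k)
  consider "k = 0" | "k = 1" | k' where "k = Suc (Suc k')"
    by (metis One_nat_def not0_implies_Suc)
  then show ?case
  proof cases
    case 3
    have expand: "complete_hom (u # w # X) (Suc (Suc k')) = complete_hom X (Suc (Suc k'))
        + (var u + var w) * complete_hom (u # w # X) (Suc k') - var u * var w * complete_hom (u # w # X) k'"
      for u w
      by (simp add: algebra_simps)
    have "complete_hom (a # b # X) k' = complete_hom (b # a # X) k'"
      and "complete_hom (a # b # X) (Suc k') = complete_hom (b # a # X) (Suc k')"
      by (rule less; simp add: 3)+
    then show ?thesis
      unfolding 3 expand[of a b] expand[of b a] by (simp only: add.commute mult.commute)
  qed (simp_all add: algebra_simps)
qed

lemma complete_hom_Cons_cong:
  "(\<And>k. complete_hom X k = complete_hom X' k) \<Longrightarrow> complete_hom (x # X) k = complete_hom (x # X') k"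
  by (induction k) auto

lemma complete_hom_append_Cons: "complete_hom (xs @ y # ys) k = complete_hom (y # xs @ ys) k"
proof (induction xs arbitrary: k)
  case (Cons x xs)
  then have "complete_hom (x # xs @ y # ys) k = complete_hom (x # y # xs @ ys) k"
    by (intro complete_hom_Cons_cong)
  then show ?case by (simp add: complete_hom_Cons_swap)
qed simp

lemma complete_hom_perm: "mset V = mset W \<Longrightarrow> complete_hom V k = complete_hom W k"
proof (induction V arbitrary: W k)
  case Nil
  then show ?case by simp
next
  case (Cons v V)
  from Cons.prems have "v \<in> set W"
    by (metis list.set_intros(1) mset_eq_setD)
  then obtain xs ys where W: "W = xs @ v # ys" by (meson split_list)
  then have "mset V = mset (xs @ ys)" using Cons.prems by simp
  then have "complete_hom (v # V) k = complete_hom (v # xs @ ys) k"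
    by (intro complete_hom_Cons_cong Cons.IH)
  then show ?case by (simp add: W complete_hom_append_Cons)
qed

lemma complete_hom_Cons_removeAll:
  assumes "distinct V" "j \<in> set V"
  shows "complete_hom (i # removeAll j V) (Suc k) =
         complete_hom (i # V) (Suc k) - var j * complete_hom (j # i # removeAll j V) k"
proof -
  have "mset (i # V) = mset (j # i # removeAll j V)"
    using assms by (simp add: distinct_remove1_removeAll[symmetric])
  then have "complete_hom (i # V) (Suc k) = complete_hom (j # i # removeAll j V) (Suc k)"
    by (rule complete_hom_perm)
  then show ?thesis
    by simp
qed

lemma keys_complete_hom:
  "b \<in> Poly_Mapping.keys (complete_hom X k) \<Longrightarrow> monom_deg b = k \<and> Poly_Mapping.keys b \<subseteq> set X"
proof (induction X k arbitrary: b rule: complete_hom.induct)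
  case (3 v X k)
  have "b \<in> Poly_Mapping.keys (complete_hom X (Suc k)) \<or> b \<in> Poly_Mapping.keys (var v * complete_hom (v # X) k)"
    using "3.prems" keys_add[of "complete_hom X (Suc k)" "var v * complete_hom (v # X) k"] by auto
  then show ?case
  proof
    assume "b \<in> Poly_Mapping.keys (var v * complete_hom (v # X) k)"
    then obtain b' where "b = Poly_Mapping.single v 1 + b'" "b' \<in> Poly_Mapping.keys (complete_hom (v # X) k)"
      using keys_single_mult[of b "Poly_Mapping.single v 1" 1] unfolding var_def by blast
    then show ?thesis using "3.IH"(2) by (auto simp: monom_deg_add keys_add_nat)
  qed (use "3.IH"(1) in auto)
qed simp_all

lemma vars_complete_hom: "vars (complete_hom X k) \<subseteq> set X"
  using keys_complete_hom unfolding vars_def by blast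

lemma pdiff_complete_hom:
  assumes "distinct V" "i \<in> set V"
  shows "pdiff i (complete_hom V (Suc k)) = complete_hom (i # V) k"
  using assms
proof (induction V arbitrary: k)
  case (Cons v X)
  show ?case
  proof (cases "i = v")
    case True
    then have "pdiff i (complete_hom X k') = 0" for k'
      using Cons.prems vars_complete_hom by (auto intro: pdiff_eq_0_if_notin_vars)
    then show ?thesis
      using True by (induction k) (simp_all add: pdiff_add pdiff_mult pdiff_var)
  next
    case False
    then have IH: "pdiff i (complete_hom X (Suc k')) = complete_hom (i # X) k'" for k'
      using Cons by simp
    show ?thesis
    proof (induction k)
      case (Suc k)
      have "pdiff i (complete_hom (v # X) (Suc (Suc k)))
          = complete_hom (i # X) (Suc k) + var v * complete_hom (i # v # X) k"
        using False by (simp only: complete_hom.simps(3)[of v X "Suc k"] pdiff_add pdiff_mult pdiff_var IH Suc) simp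
      also have "\<dots> = complete_hom (v # i # X) (Suc k)"
        by (simp add: complete_hom_Cons_swap)
      also have "\<dots> = complete_hom (i # v # X) (Suc k)"
        by (rule complete_hom_Cons_swap)
      finally show ?case .
    qed (use False IH in \<open>simp add: pdiff_add pdiff_mult pdiff_var\<close>)
  qed
qed simp

lemma sum_complete_hom_Cons:
  assumes "distinct V"
  shows "(\<Sum>i\<in>set V. complete_hom (i # V) k) = of_nat (length V + k) * complete_hom V k"
  using assms
proof (induction V arbitrary: k)
  case Nil
  then show ?case by (cases k) auto
next
  case (Cons v X)
  then have vX: "v \<notin> set X" and dX: "distinct X" by auto
  define T where "T k = (\<Sum>i\<in>set X. complete_hom (i # v # X) k)" for k
  have T_Suc: "T (Suc k) = of_nat (length X + Suc k) * complete_hom X (Suc k) + var v * T k" for k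
  proof -
    have "T (Suc k) = (\<Sum>i\<in>set X. complete_hom (v # i # X) (Suc k))"
      unfolding T_def by (simp only: complete_hom_Cons_swap)
    also have "\<dots> = (\<Sum>i\<in>set X. complete_hom (i # X) (Suc k) + var v * complete_hom (v # i # X) k)"
      by (simp only: complete_hom.simps(3))
    also have "\<dots> = (\<Sum>i\<in>set X. complete_hom (i # X) (Suc k)) + var v * T k"
      unfolding sum.distrib sum_distrib_left T_def by (simp only: complete_hom_Cons_swap)
    finally show ?thesis by (simp only: Cons.IH[OF dX])
  qed
  have "complete_hom (v # v # X) k + T k = of_nat (length X + 1 + k) * complete_hom (v # X) k"
  proof (induction k)
    case 0
    then show ?case by (simp add: T_def distinct_card[OF dX])
  next
    case (Suc k)
    have "complete_hom (v # v # X) (Suc k) + T (Suc k) = complete_hom (v # X) (Suc k)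
        + of_nat (length X + Suc k) * complete_hom X (Suc k) + var v * (complete_hom (v # v # X) k + T k)"
      by (simp add: T_Suc algebra_simps)
    also have "\<dots> = complete_hom (v # X) (Suc k) + of_nat (length X + Suc k) * (complete_hom X (Suc k) + var v * complete_hom (v # X) k)"
      using Suc by (simp add: algebra_simps)
    also have "\<dots> = of_nat (length X + 1 + Suc k) * complete_hom (v # X) (Suc k)"
      by (simp add: algebra_simps)
    finally show ?case .
  qed
  then show ?case using vX by (simp add: T_def)
qed

lemma sum_var_mult_complete_hom_Cons:
  assumes "distinct V"
  shows "(\<Sum>i\<in>set V. var i * complete_hom (i # V) k) = of_nat (Suc k) * complete_hom V (Suc k)"
  using assms
proof (induction V arbitrary: k)
  case Nil
  then show ?case by simp
next
  case (Cons v X)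
  then have vX: "v \<notin> set X" and dX: "distinct X" by auto
  define T where "T k = (\<Sum>i\<in>set X. var i * complete_hom (i # v # X) k)" for k
  have T_Suc: "T (Suc k) = of_nat (Suc (Suc k)) * complete_hom X (Suc (Suc k)) + var v * T k" for k
  proof -
    have "T (Suc k) = (\<Sum>i\<in>set X. var i * complete_hom (v # i # X) (Suc k))"
      unfolding T_def by (simp only: complete_hom_Cons_swap)
    also have "\<dots> = (\<Sum>i\<in>set X. var i * complete_hom (i # X) (Suc k) + var v * (var i * complete_hom (v # i # X) k))"
      by (simp only: complete_hom.simps(3) algebra_simps)
    also have "\<dots> = (\<Sum>i\<in>set X. var i * complete_hom (i # X) (Suc k)) + var v * T k"
      unfolding sum.distrib sum_distrib_left T_def by (simp only: complete_hom_Cons_swap)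
    finally show ?thesis by (simp only: Cons.IH[OF dX])
  qed
  have "var v * complete_hom (v # v # X) k + T k = of_nat (Suc k) * complete_hom (v # X) (Suc k)"
  proof (induction k)
    case 0
    then show ?case using Cons.IH[OF dX, of 0] by (simp add: T_def)
  next
    case (Suc k)
    have "var v * complete_hom (v # v # X) (Suc k) + T (Suc k) = var v * complete_hom (v # X) (Suc k)
        + of_nat (Suc (Suc k)) * complete_hom X (Suc (Suc k)) + var v * (var v * complete_hom (v # v # X) k + T k)"
      by (simp add: T_Suc algebra_simps)
    also have "\<dots> = var v * complete_hom (v # X) (Suc k) + of_nat (Suc (Suc k)) * complete_hom X (Suc (Suc k))
        + var v * (of_nat (Suc k) * complete_hom (v # X) (Suc k))"
      using Suc by simp
    also have "\<dots> = of_nat (Suc (Suc k)) * (complete_hom X (Suc (Suc k)) + var v * complete_hom (v # X) (Suc k))"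
      by (simp add: algebra_simps)
    also have "\<dots> = of_nat (Suc (Suc k)) * complete_hom (v # X) (Suc (Suc k))"
      by (simp only: complete_hom.simps(3))
    finally show ?case .
  qed
  then show ?case using vX by (simp add: T_def)
qed

lemma complete_hom_Cons_eq_sum: "complete_hom (i # V) k = (\<Sum>j\<le>k. var i ^ j * complete_hom V (k - j))"
proof (induction k)
  case (Suc k)
  have "(\<Sum>j\<le>Suc k. var i ^ j * complete_hom V (Suc k - j))
        = complete_hom V (Suc k) + var i * (\<Sum>j\<le>k. var i ^ j * complete_hom V (k - j))"
    by (subst sum.atMost_Suc_shift) (simp add: sum_distrib_left algebra_simps)
  then show ?case using Suc by simp
qed simp

lemma newton_complete_hom:
  assumes "distinct V"
  shows "of_nat (Suc k) * complete_hom V (Suc k) =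
         (\<Sum>j\<le>k. (\<Sum>i\<in>set V. var i ^ Suc j) * complete_hom V (k - j))"
proof -
  have "of_nat (Suc k) * complete_hom V (Suc k) = (\<Sum>i\<in>set V. var i * complete_hom (i # V) k)"
    by (simp only: sum_var_mult_complete_hom_Cons[OF assms])
  also have "\<dots> = (\<Sum>i\<in>set V. \<Sum>j\<le>k. var i ^ Suc j * complete_hom V (k - j))"
    by (simp add: complete_hom_Cons_eq_sum sum_distrib_left mult.assoc)
  finally show ?thesis
    by (simp add: sum.swap[of _ "set V"] sum_distrib_right)
qed

section \<open>The ideal generated by the power sums\<close>

inductive psum_ideal :: "nat \<Rightarrow> mpoly \<Rightarrow> bool" for n where
  gen: "1 \<le> j \<Longrightarrow> j \<le> n \<Longrightarrow> psum_ideal n (power_sum n j)"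
| zero: "psum_ideal n 0"
| add: "psum_ideal n p \<Longrightarrow> psum_ideal n q \<Longrightarrow> psum_ideal n (p + q)"
| mult: "psum_ideal n p \<Longrightarrow> vars c \<subseteq> {1..n} \<Longrightarrow> psum_ideal n (c * p)"

lemma psum_ideal_sum: "(\<And>x. x \<in> A \<Longrightarrow> psum_ideal n (F x)) \<Longrightarrow> psum_ideal n (sum F A)"
  by (induction A rule: infinite_finite_induct) (auto intro: psum_ideal.intros)

lemma psum_ideal_scale_Suc:
  assumes "psum_ideal n (of_nat (Suc k) * p)"
  shows "psum_ideal n p"
proof -
  have "p = Poly_Mapping.single 0 (1 / of_nat (Suc k)) * (of_nat (Suc k) * p)"
    by (simp only: single_inverse_mult_of_nat)
  moreover have "vars (Poly_Mapping.single 0 (1 / of_nat (Suc k))) \<subseteq> {1..n}"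
    using vars_single[of 0] by auto
  ultimately show ?thesis
    using psum_ideal.mult[OF assms] by metis
qed

lemma complete_hom_in_psum_ideal:
  assumes "1 \<le> d" "d \<le> n"
  shows "psum_ideal n (complete_hom [1..<Suc n] d)"
proof -
  obtain k where d: "d = Suc k" using assms(1) by (cases d) auto
  let ?V = "[1..<Suc n]"
  have vars_V: "vars (complete_hom ?V m) \<subseteq> {1..n}" for m
    using vars_complete_hom[of ?V m] by (simp only: set_upt atLeastLessThanSuc_atLeastAtMost)
  have terms: "psum_ideal n (power_sum n (Suc j) * complete_hom ?V (k - j))" if "j \<le> k" for j
  proof -
    have "psum_ideal n (complete_hom ?V (k - j) * power_sum n (Suc j))"
      by (rule psum_ideal.mult[OF psum_ideal.gen]) (use that assms d vars_V in simp_all)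
    then show ?thesis by (simp only: mult.commute)
  qed
  have "of_nat (Suc k) * complete_hom ?V (Suc k) = (\<Sum>j\<le>k. power_sum n (Suc j) * complete_hom ?V (k - j))"
    using newton_complete_hom[OF distinct_upt[of 1 "Suc n"], of k]
    unfolding power_sum_def set_upt atLeastLessThanSuc_atLeastAtMost .
  also have "psum_ideal n \<dots>"
    by (rule psum_ideal_sum) (use terms in blast)
  finally have "psum_ideal n (of_nat (Suc k) * complete_hom ?V (Suc k))" .
  then show ?thesis
    using d psum_ideal_scale_Suc by blast
qed

lemma complete_hom_upt_in_psum_ideal:
  assumes "1 \<le> t" "t \<le> d" "d \<le> n"
  shows "psum_ideal n (complete_hom [t..<Suc n] d)"
  using assms
proof (induction t arbitrary: d rule: dec_induct)
  case base
  then show ?case using complete_hom_in_psum_ideal by blast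
next
  case (step t)
  then obtain d' where d': "d = Suc d'" by (cases d) auto
  have "complete_hom [t..<Suc n] d = complete_hom [Suc t..<Suc n] d + var t * complete_hom [t..<Suc n] d'"
    using step by (simp add: d' upt_rec)
  then have "complete_hom [Suc t..<Suc n] d = complete_hom [t..<Suc n] d + (- var t) * complete_hom [t..<Suc n] d'"
    by simp
  moreover have "vars (- var t) \<subseteq> {1..n}"
    using step by (simp add: vars_var)
  moreover have "psum_ideal n (complete_hom [t..<Suc n] d)" "psum_ideal n (complete_hom [t..<Suc n] d')"
    using step d' by auto
  ultimately show ?case
    by (metis psum_ideal.add psum_ideal.mult)
qed

section \<open>Differential forms\<close>

definition basic_form :: "nat set \<Rightarrow> mpoly \<Rightarrow> pform" where
  "basic_form S g = (\<lambda>T. if T = S then g else 0)"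

lemma wsign_empty_left [simp]: "wsign {} T = 1"
  by (simp add: wsign_def)

lemma wsign_empty_right [simp]: "wsign S {} = 1"
  by (simp add: wsign_def)

lemma wsign_mult_self: "of_int (wsign S T) * of_int (wsign S T) = (1 :: mpoly)"
proof -
  have "wsign S T * wsign S T = 1"
    unfolding wsign_def by (simp flip: power_mult_distrib)
  then show ?thesis by (metis of_int_1 of_int_mult)
qed

lemma wedge_zero_form_left:
  assumes "\<And>U. infinite U \<Longrightarrow> \<omega> U = 0"
  shows "wedge (zero_form c) \<omega> = (\<lambda>U. c * \<omega> U)"
proof
  fix U
  show "wedge (zero_form c) \<omega> U = c * \<omega> U"
  proof (cases "finite U")
    case True
    then have "wedge (zero_form c) \<omega> U = (\<Sum>S\<in>{{}}. of_int (wsign S (U - S)) * zero_form c S * \<omega> (U - S))"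
      unfolding wedge_def by (intro sum.mono_neutral_right) (auto simp: zero_form_def)
    then show ?thesis by (simp add: zero_form_def)
  qed (simp add: assms wedge_def)
qed

lemma wedge_zero_form_right:
  assumes "\<And>U. infinite U \<Longrightarrow> \<omega> U = 0"
  shows "wedge \<omega> (zero_form c) = (\<lambda>U. \<omega> U * c)"
proof
  fix U
  show "wedge \<omega> (zero_form c) U = \<omega> U * c"
  proof (cases "finite U")
    case True
    then have "wedge \<omega> (zero_form c) U = (\<Sum>S\<in>{U}. of_int (wsign S (U - S)) * \<omega> S * zero_form c (U - S))"
      unfolding wedge_def by (intro sum.mono_neutral_right) (auto simp: zero_form_def)
    then show ?thesis by (simp add: zero_form_def)
  qed (simp add: assms wedge_def)
qed

lemma ext_d_infinite: "infinite U \<Longrightarrow> ext_d \<omega> U = 0"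
  by (simp add: ext_d_def)

lemma ext_d_zero_form: "ext_d (zero_form g) U = (if card U = 1 then pdiff (the_elem U) g else 0)"
proof (cases "card U = 1")
  case True
  then obtain i where "U = {i}" by (rule card_1_singletonE)
  then show ?thesis by (simp add: ext_d_def zero_form_def)
next
  case False
  have "U - {i} \<noteq> {}" if "i \<in> U" for i
  proof
    assume "U - {i} = {}"
    with that have "U = {i}" by blast
    with False show False by simp
  qed
  then show ?thesis
    using False by (simp add: ext_d_def zero_form_def)
qed

lemma zero_form_add: "zero_form (a + b) = (\<lambda>U. zero_form a U + zero_form b U)"
  by (auto simp: zero_form_def)

lemma zero_form_mult: "zero_form (c * p) = wedge (zero_form c) (zero_form p)"
  by (subst wedge_zero_form_left) (auto simp: zero_form_def)

lemma ext_d_zero_form_add: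
  "ext_d (zero_form (a + b)) = (\<lambda>U. ext_d (zero_form a) U + ext_d (zero_form b) U)"
  by (rule ext) (simp add: ext_d_zero_form pdiff_add)

lemma ext_d_zero_form_mult:
  "ext_d (zero_form (c * p)) =
   (\<lambda>U. wedge (ext_d (zero_form c)) (zero_form p) U + wedge (zero_form c) (ext_d (zero_form p)) U)"
proof -
  have "wedge (ext_d (zero_form c)) (zero_form p) = (\<lambda>U. ext_d (zero_form c) U * p)"
    "wedge (zero_form c) (ext_d (zero_form p)) = (\<lambda>U. c * ext_d (zero_form p) U)"
    by (simp_all add: wedge_zero_form_left wedge_zero_form_right ext_d_infinite)
  then show ?thesis
    by (intro ext) (simp add: ext_d_zero_form pdiff_mult)
qed

lemma OmegaI:
  "(\<And>S. \<omega> S \<noteq> 0 \<Longrightarrow> S \<subseteq> {1..n} \<and> vars (\<omega> S) \<subseteq> {1..n}) \<Longrightarrow> \<omega> \<in> Omega n"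
  unfolding Omega_def vars_def by blast

lemma zero_form_in_Omega: "vars c \<subseteq> {1..n} \<Longrightarrow> zero_form c \<in> Omega n"
  by (rule OmegaI) (auto simp: zero_form_def split: if_splits)

lemma ext_d_zero_form_in_Omega:
  assumes "vars c \<subseteq> {1..n}"
  shows "ext_d (zero_form c) \<in> Omega n"
proof (rule OmegaI)
  fix S
  assume S0: "ext_d (zero_form c) S \<noteq> 0"
  then have "card S = 1"
    by (simp add: ext_d_zero_form split: if_splits)
  then obtain i where S: "S = {i}"
    by (rule card_1_singletonE)
  then have "pdiff i c \<noteq> 0"
    using S0 by (simp add: ext_d_zero_form)
  then have "i \<in> vars c"
    using pdiff_eq_0_if_notin_vars by blast
  then show "S \<subseteq> {1..n} \<and> vars (ext_d (zero_form c) S) \<subseteq> {1..n}"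
    using assms vars_pdiff[of i c] S by (auto simp: ext_d_zero_form)
qed

lemma basic_form_in_Omega: "S \<subseteq> {1..n} \<Longrightarrow> vars g \<subseteq> {1..n} \<Longrightarrow> basic_form S g \<in> Omega n"
  by (rule OmegaI) (auto simp: basic_form_def split: if_splits)

lemma psum_ideal_forms_in_I_n:
  assumes "psum_ideal n g"
  shows "zero_form g \<in> I_n n \<and> ext_d (zero_form g) \<in> I_n n"
  using assms
proof (induction rule: psum_ideal.induct)
  case (gen j)
  then show ?case unfolding I_n_def by (auto intro: gen_ideal.gen)
next
  case zero
  have "zero_form 0 = (\<lambda>U. 0)" "ext_d (zero_form 0) = (\<lambda>U. 0)"
    by (auto simp: zero_form_def ext_d_def)
  then show ?case unfolding I_n_def by (simp add: gen_ideal.zero)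
next
  case (add p q)
  have "zero_form (p + q) \<in> I_n n"
    using add unfolding zero_form_add I_n_def by (auto intro: gen_ideal.add)
  moreover have "ext_d (zero_form (p + q)) \<in> I_n n"
    using add unfolding I_n_def by (subst ext_d_zero_form_add) (auto intro: gen_ideal.add)
  ultimately show ?case ..
next
  case (mult p c)
  have "zero_form (c * p) \<in> I_n n"
    using mult unfolding zero_form_mult I_n_def by (blast intro: gen_ideal.lmult zero_form_in_Omega)
  moreover have "ext_d (zero_form (c * p)) \<in> I_n n"
    using mult unfolding I_n_def
    by (subst ext_d_zero_form_mult)
       (auto intro!: gen_ideal.add gen_ideal.lmult zero_form_in_Omega ext_d_zero_form_in_Omega)
  ultimately show ?case ..
qed

text \<open>In \<open>dg \<and> dx\<^bsub>Y-{i}\<^esub>\<close> only the summand \<open>\<partial>\<^sub>ig dx\<^sub>i\<close> of \<open>dg\<close> survives, as \<open>g\<close> involves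
  only variables in \<open>Y\<close>.\<close>

lemma wedge_ext_d_basic_form:
  assumes "finite Y" "i \<in> Y" "vars g \<subseteq> Y"
  shows "wedge (ext_d (zero_form g)) (basic_form (Y - {i}) 1) =
         basic_form Y (of_int (wsign {i} (Y - {i})) * pdiff i g)"
proof
  fix U
  let ?t = "\<lambda>S. of_int (wsign S (U - S)) * ext_d (zero_form g) S * basic_form (Y - {i}) 1 (U - S)"
  have nonzero: "S = {i} \<and> U = Y" if "S \<subseteq> U" "?t S \<noteq> 0" for S
  proof -
    from that(2) have "card S = 1"
      by (auto simp: ext_d_zero_form split: if_splits)
    then obtain j where S: "S = {j}"
      by (rule card_1_singletonE)
    with that(2) have "pdiff j g \<noteq> 0" and U: "U - {j} = Y - {i}"
      by (auto simp: ext_d_zero_form basic_form_def split: if_splits)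
    then have "j \<in> Y"
      using pdiff_eq_0_if_notin_vars assms(3) by blast
    then show ?thesis
      using S U that(1) assms(2) by blast
  qed
  show "wedge (ext_d (zero_form g)) (basic_form (Y - {i}) 1) U =
        basic_form Y (of_int (wsign {i} (Y - {i})) * pdiff i g) U"
  proof (cases "U = Y")
    case True
    then have "sum ?t (Pow U) = sum ?t {{i}}"
      using assms nonzero by (intro sum.mono_neutral_right) auto
    then show ?thesis
      using True by (simp add: wedge_def ext_d_zero_form basic_form_def)
  next
    case False
    then have "sum ?t (Pow U) = 0"
      using nonzero by (intro sum.neutral) auto
    then show ?thesis
      using False by (simp add: wedge_def basic_form_def)
  qed
qed

lemma pdiff_basic_form_in_I_n:
  assumes "psum_ideal n g" "vars g \<subseteq> Y" "Y \<subseteq> {1..n}" "finite Y" "i \<in> Y"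
  shows "basic_form Y (pdiff i g) \<in> I_n n"
proof -
  let ?w = "of_int (wsign {i} (Y - {i})) :: mpoly"
  have "wedge (ext_d (zero_form g)) (basic_form (Y - {i}) 1) \<in> I_n n"
    using psum_ideal_forms_in_I_n[OF assms(1)] basic_form_in_Omega[of "Y - {i}" n 1] assms(3)
    unfolding I_n_def by (auto simp: vars_def intro: gen_ideal.rmult)
  then have "wedge (zero_form ?w) (basic_form Y (?w * pdiff i g)) \<in> I_n n"
    unfolding wedge_ext_d_basic_form[OF assms(4,5) assms(2)] I_n_def
    by (rule gen_ideal.lmult) (simp add: zero_form_in_Omega)
  moreover have "wedge (zero_form ?w) (basic_form Y (?w * pdiff i g)) = basic_form Y (pdiff i g)"
    using assms(4) by (subst wedge_zero_form_left) (auto simp: basic_form_def mult.assoc[symmetric] wsign_mult_self)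
  ultimately show ?thesis by simp
qed

section \<open>Monomials in the ideal of the partial derivatives of \<open>h\<^sub>k\<close>\<close>

text \<open>\<open>hideal V \<kappa> R d p\<close>: \<open>p\<close> is a homogeneous element of degree \<open>d\<close> of the ideal of \<open>\<complex>[x\<^sub>V]\<close>
  generated by the polynomials \<open>\<partial>\<^sub>i h\<^sub>k\<^sub>+\<^sub>1(V) = complete_hom (i # V) k\<close> with \<open>\<kappa> i \<le> k + 1 \<le> R\<close>.\<close>

inductive hideal :: "nat list \<Rightarrow> (nat \<Rightarrow> nat) \<Rightarrow> nat \<Rightarrow> nat \<Rightarrow> mpoly \<Rightarrow> bool" for V \<kappa> R where
  gen: "i \<in> set V \<Longrightarrow> \<kappa> i \<le> Suc k \<Longrightarrow> Suc k \<le> R \<Longrightarrow> hideal V \<kappa> R k (complete_hom (i # V) k)"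
| zero: "hideal V \<kappa> R d 0"
| add: "hideal V \<kappa> R d p \<Longrightarrow> hideal V \<kappa> R d q \<Longrightarrow> hideal V \<kappa> R d (p + q)"
| mon: "hideal V \<kappa> R d p \<Longrightarrow> Poly_Mapping.keys a \<subseteq> set V \<Longrightarrow>
        hideal V \<kappa> R (d + monom_deg a) (Poly_Mapping.single a c * p)"

lemma hideal_scale: "hideal V \<kappa> R d p \<Longrightarrow> hideal V \<kappa> R d (Poly_Mapping.single 0 c * p)"
  using hideal.mon[of V \<kappa> R d p 0 c] by simp

lemma hideal_diff: "hideal V \<kappa> R d p \<Longrightarrow> hideal V \<kappa> R d q \<Longrightarrow> hideal V \<kappa> R d (p - q)"
  using hideal.add hideal_scale[of V \<kappa> R d q "-1"] by (fastforce simp: single_uminus)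

lemma hideal_sum: "(\<And>x. x \<in> A \<Longrightarrow> hideal V \<kappa> R d (F x)) \<Longrightarrow> hideal V \<kappa> R d (sum F A)"
  by (induction A rule: infinite_finite_induct) (auto intro: hideal.intros)

lemma hideal_var_mult: "j \<in> set V \<Longrightarrow> hideal V \<kappa> R d p \<Longrightarrow> hideal V \<kappa> R (Suc d) (var j * p)"
  using hideal.mon[of V \<kappa> R d p "Poly_Mapping.single j 1" 1] by (simp add: var_def)

lemma complete_hom_in_hideal:
  assumes "distinct V" "\<forall>i\<in>set V. \<kappa> i \<le> Suc (Suc k)" "Suc (Suc k) \<le> R"
  shows "hideal V \<kappa> R (Suc k) (complete_hom V (Suc k))"
proof -
  have "hideal V \<kappa> R (Suc k) (\<Sum>i\<in>set V. complete_hom (i # V) (Suc k))"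
    using assms by (intro hideal_sum hideal.gen) auto
  then have "hideal V \<kappa> R (Suc k) (of_nat (Suc (length V + k)) * complete_hom V (Suc k))"
    by (simp only: sum_complete_hom_Cons[OF assms(1)] add_Suc_right)
  then show ?thesis
    using hideal_scale single_inverse_mult_of_nat by metis
qed

text \<open>The only generator lost by raising \<open>\<kappa> j\<close> is \<open>h\<^sub>k(x\<^sub>j, V)\<close> with \<open>k + 2 = \<kappa> j\<close>, and
  \<open>x\<^sub>j h\<^sub>k(x\<^sub>j, V) = h\<^sub>k\<^sub>+\<^sub>1(x\<^sub>j, V) - h\<^sub>k\<^sub>+\<^sub>1(V)\<close> lies in the new ideal.\<close>

lemma hideal_raise_weight:
  assumes "distinct V" "j \<in> set V" "\<forall>i\<in>set V. \<kappa> i \<le> \<kappa> j" "2 \<le> \<kappa> j" "\<kappa> j \<le> R"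
  shows "hideal V (\<kappa>(j := \<kappa> j - 1)) R d p \<Longrightarrow> hideal V \<kappa> R (Suc d) (var j * p)"
proof (induction rule: hideal.induct)
  case (gen i k)
  show ?case
  proof (cases "\<kappa> i \<le> Suc k")
    case True
    then show ?thesis
      using gen hideal.gen[of i V \<kappa> k R] hideal_var_mult[OF assms(2)] by blast
  next
    case False
    with gen have "i = j" and \<kappa>j: "\<kappa> j = Suc (Suc k)"
      by (auto split: if_splits)
    have eq: "var j * complete_hom (j # V) k = complete_hom (j # V) (Suc k) - complete_hom V (Suc k)"
      by simp
    have "hideal V \<kappa> R (Suc k) (complete_hom (j # V) (Suc k))"
      using assms(2,5) \<kappa>j by (intro hideal.gen) auto
    moreover have "hideal V \<kappa> R (Suc k) (complete_hom V (Suc k))"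
      using assms \<kappa>j by (intro complete_hom_in_hideal) auto
    ultimately show ?thesis
      unfolding \<open>i = j\<close> eq by (rule hideal_diff)
  qed
next
  case (mon d p a c)
  then have "hideal V \<kappa> R (Suc d + monom_deg a) (Poly_Mapping.single a c * (var j * p))"
    by (intro hideal.mon) auto
  then show ?case by (simp add: algebra_simps)
qed (auto simp: distrib_left intro: hideal.intros)

definition cofactor_homogeneous :: "nat list \<Rightarrow> nat \<Rightarrow> mpoly \<Rightarrow> bool" where
  "cofactor_homogeneous V d g \<longleftrightarrow>
     (\<forall>b\<in>Poly_Mapping.keys g. Suc (monom_deg b) = d \<and> Poly_Mapping.keys b \<subseteq> set V)"

lemma cofactor_homogeneous_zero: "cofactor_homogeneous V d 0"
  by (simp add: cofactor_homogeneous_def)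

lemma cofactor_homogeneous_add:
  "cofactor_homogeneous V d g \<Longrightarrow> cofactor_homogeneous V d h \<Longrightarrow> cofactor_homogeneous V d (g + h)"
  unfolding cofactor_homogeneous_def using keys_add[of g h] by blast

lemma cofactor_homogeneous_mult_single:
  assumes "Poly_Mapping.keys a \<subseteq> set V" "cofactor_homogeneous V d g"
  shows "cofactor_homogeneous V (d + monom_deg a) (Poly_Mapping.single a c * g)"
  unfolding cofactor_homogeneous_def
proof
  fix b
  assume "b \<in> Poly_Mapping.keys (Poly_Mapping.single a c * g)"
  then obtain b' where "b = a + b'" "b' \<in> Poly_Mapping.keys g"
    using keys_single_mult by blast
  then show "Suc (monom_deg b) = d + monom_deg a \<and> Poly_Mapping.keys b \<subseteq> set V"
    using assms unfolding cofactor_homogeneous_def by (auto simp: monom_deg_add keys_add_nat)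
qed

lemma complete_hom_removeAll_decomp:
  assumes "distinct V" "j \<in> set V" "i \<in> set V"
  shows "\<exists>g. complete_hom (i # removeAll j V) k = complete_hom (i # V) k + var j * g \<and>
             cofactor_homogeneous V k g"
proof (cases k)
  case 0
  then have "complete_hom (i # removeAll j V) k = complete_hom (i # V) k + var j * 0"
    by simp
  with cofactor_homogeneous_zero show ?thesis
    by blast
next
  case (Suc k')
  let ?W = "j # i # removeAll j V"
  have "complete_hom (i # removeAll j V) k = complete_hom (i # V) k + var j * (- complete_hom ?W k')"
    using complete_hom_Cons_removeAll[OF assms(1,2), of i k'] Suc by simp
  moreover have "set ?W \<subseteq> set V"
    using assms(2,3) by auto
  then have "cofactor_homogeneous V k (- complete_hom ?W k')"
    unfolding cofactor_homogeneous_def using keys_complete_hom[of _ ?W k'] Suc by (metis keys_minus order_trans)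
  ultimately show ?thesis
    by blast
qed

lemma hideal_removeAll_decomp:
  assumes "distinct V" "j \<in> set V"
  shows "hideal (removeAll j V) \<kappa> R d p \<Longrightarrow>
    \<exists>q g. hideal V \<kappa> R d q \<and> p = q + var j * g \<and> cofactor_homogeneous V d g"
proof (induction rule: hideal.induct)
  case (gen i k)
  then have "i \<in> set V" "hideal V \<kappa> R k (complete_hom (i # V) k)"
    by (auto intro: hideal.gen)
  with complete_hom_removeAll_decomp[OF assms] show ?case
    by blast
next
  case zero
  show ?case
    using cofactor_homogeneous_zero by (intro exI[of _ 0]) (auto intro: hideal.zero)
next
  case (add d p q)
  then obtain q1 g1 q2 g2 where "hideal V \<kappa> R d q1" "p = q1 + var j * g1" "cofactor_homogeneous V d g1"
      "hideal V \<kappa> R d q2" "q = q2 + var j * g2" "cofactor_homogeneous V d g2"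
    by blast
  then have "hideal V \<kappa> R d (q1 + q2)" "p + q = (q1 + q2) + var j * (g1 + g2)"
    "cofactor_homogeneous V d (g1 + g2)"
    by (simp_all add: hideal.add cofactor_homogeneous_add distrib_left)
  then show ?case by blast
next
  case (mon d p a c)
  then obtain q g where q: "hideal V \<kappa> R d q" and p: "p = q + var j * g" and g: "cofactor_homogeneous V d g"
    by blast
  have aV: "Poly_Mapping.keys a \<subseteq> set V"
    using mon(2) by auto
  have "Poly_Mapping.single a c * p = Poly_Mapping.single a c * q + var j * (Poly_Mapping.single a c * g)"
    using p by (simp add: algebra_simps)
  with hideal.mon[OF q aV] cofactor_homogeneous_mult_single[OF aV g] show ?case
    by blast
qed

lemma hideal_of_removeAll:
  assumes "distinct V" "j \<in> set V" "hideal (removeAll j V) \<kappa> R d p"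
    and var_mult: "\<And>b. Suc (monom_deg b) = d \<Longrightarrow> Poly_Mapping.keys b \<subseteq> set V \<Longrightarrow>
                      hideal V \<kappa> R d (var j * Poly_Mapping.single b 1)"
  shows "hideal V \<kappa> R d p"
proof -
  obtain q g where q: "hideal V \<kappa> R d q" and p: "p = q + var j * g"
    and g: "cofactor_homogeneous V d g"
    using hideal_removeAll_decomp[OF assms(1-3)] by blast
  have "var j * g = (\<Sum>b\<in>Poly_Mapping.keys g.
                      Poly_Mapping.single 0 (Poly_Mapping.lookup g b) * (var j * Poly_Mapping.single b 1))"
    by (subst (1) sum_single_lookup[symmetric]) (simp add: sum_distrib_left mult_single algebra_simps)
  also have "hideal V \<kappa> R d \<dots>"
    using g var_mult unfolding cofactor_homogeneous_def by (intro hideal_sum hideal_scale) auto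
  finally show ?thesis
    using q p hideal.add by metis
qed

definition degree_threshold :: "nat list \<Rightarrow> (nat \<Rightarrow> nat) \<Rightarrow> int" where
  "degree_threshold V \<kappa> = (\<Sum>i\<in>set V. int (\<kappa> i) - 2) + 1"

lemma degree_threshold_decr:
  "j \<in> set V \<Longrightarrow> 1 \<le> \<kappa> j \<Longrightarrow> degree_threshold V (\<kappa>(j := \<kappa> j - 1)) = degree_threshold V \<kappa> - 1"
  unfolding degree_threshold_def by (simp add: sum.remove of_nat_diff)

lemma degree_threshold_removeAll:
  "j \<in> set V \<Longrightarrow> 2 \<le> \<kappa> j \<Longrightarrow> degree_threshold (removeAll j V) \<kappa> \<le> degree_threshold V \<kappa>"
  unfolding degree_threshold_def by (simp add: sum.remove)

definition monomials_in_hideal :: "nat list \<Rightarrow> (nat \<Rightarrow> nat) \<Rightarrow> nat \<Rightarrow> bool" where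
  "monomials_in_hideal V \<kappa> R \<longleftrightarrow>
     (\<forall>a c. Poly_Mapping.keys a \<subseteq> set V \<longrightarrow> degree_threshold V \<kappa> \<le> int (monom_deg a) \<longrightarrow>
            hideal V \<kappa> R (monom_deg a) (Poly_Mapping.single a c))"

lemma monomials_in_hideal_Nil: "monomials_in_hideal [] \<kappa> R"
  by (simp add: monomials_in_hideal_def degree_threshold_def)

lemma monomials_in_hideal_of_weight_one:
  assumes "i \<in> set V" "\<kappa> i = 1" "1 \<le> R"
  shows "monomials_in_hideal V \<kappa> R"
  unfolding monomials_in_hideal_def
proof (intro allI impI)
  fix a :: "nat \<Rightarrow>\<^sub>0 nat" and c :: complex
  assume aV: "Poly_Mapping.keys a \<subseteq> set V"
  have "hideal V \<kappa> R 0 (complete_hom (i # V) 0)"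
    using assms by (intro hideal.gen) auto
  from hideal.mon[OF this aV, of c] show "hideal V \<kappa> R (monom_deg a) (Poly_Mapping.single a c)"
    by (simp only: complete_hom.simps(1) add_0 mult_1_right)
qed

text \<open>For \<open>j\<close> of maximal weight, monomials divisible by \<open>x\<^sub>j\<close> come from lowering \<open>\<kappa> j\<close>,
  monomials free of \<open>x\<^sub>j\<close> from removing \<open>j\<close> from \<open>V\<close>.\<close>

lemma monomials_in_hideal_step:
  assumes dV: "distinct V" and jV: "j \<in> set V" and j_max: "\<forall>i\<in>set V. \<kappa> i \<le> \<kappa> j"
    and "2 \<le> \<kappa> j" "\<kappa> j \<le> R"
    and lower: "monomials_in_hideal V (\<kappa>(j := \<kappa> j - 1)) R"
    and remove: "monomials_in_hideal (removeAll j V) \<kappa> R"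
  shows "monomials_in_hideal V \<kappa> R"
  unfolding monomials_in_hideal_def
proof (intro allI impI)
  fix a :: "nat \<Rightarrow>\<^sub>0 nat" and c :: complex
  assume aV: "Poly_Mapping.keys a \<subseteq> set V" and deg_a: "degree_threshold V \<kappa> \<le> int (monom_deg a)"
  have x_j_mult: "hideal V \<kappa> R (Suc (monom_deg b)) (var j * Poly_Mapping.single b c')"
    if "Poly_Mapping.keys b \<subseteq> set V" "degree_threshold V \<kappa> \<le> int (Suc (monom_deg b))" for b c'
  proof -
    have "hideal V (\<kappa>(j := \<kappa> j - 1)) R (monom_deg b) (Poly_Mapping.single b c')"
      using lower that degree_threshold_decr[OF jV, of \<kappa>] assms(4)
      unfolding monomials_in_hideal_def by simp
    then show ?thesis
      by (rule hideal_raise_weight[OF dV jV j_max assms(4,5)])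
  qed
  show "hideal V \<kappa> R (monom_deg a) (Poly_Mapping.single a c)"
  proof (cases "Poly_Mapping.lookup a j = 0")
    case False
    let ?b = "a - Poly_Mapping.single j 1"
    have "Poly_Mapping.keys ?b \<subseteq> set V"
      using aV keys_diff_nat by blast
    then show ?thesis
      using x_j_mult[of ?b c] deg_a single_add_diff_single[OF False]
      by (metis monom_deg_add monom_deg_single mult_single mult_1 plus_1_eq_Suc var_def)
  next
    case True
    then have "Poly_Mapping.keys a \<subseteq> set (removeAll j V)"
      using aV by (auto simp: in_keys_iff)
    moreover have "degree_threshold (removeAll j V) \<kappa> \<le> int (monom_deg a)"
      using degree_threshold_removeAll[of j V \<kappa>] jV assms(4) deg_a by simp
    ultimately have "hideal (removeAll j V) \<kappa> R (monom_deg a) (Poly_Mapping.single a c)"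
      using remove unfolding monomials_in_hideal_def by blast
    then show ?thesis
      by (rule hideal_of_removeAll[OF dV jV]) (use x_j_mult deg_a in fastforce)
  qed
qed

lemma monomials_in_hideal:
  "distinct V \<Longrightarrow> \<forall>i\<in>set V. 1 \<le> \<kappa> i \<and> \<kappa> i \<le> R \<Longrightarrow> monomials_in_hideal V \<kappa> R"
proof (induction "sum \<kappa> (set V)" arbitrary: V \<kappa> rule: less_induct)
  case less
  show ?case
  proof (cases "V = [] \<or> (\<exists>i\<in>set V. \<kappa> i = 1)")
    case True
    then show ?thesis
      using monomials_in_hideal_Nil monomials_in_hideal_of_weight_one less.prems(2) by fastforce
  next
    case False
    then have \<kappa>2: "2 \<le> \<kappa> i" if "i \<in> set V" for i
      using less.prems(2) that by fastforce
    from False have "Max (\<kappa> ` set V) \<in> \<kappa> ` set V"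
      by simp
    then obtain j where jV: "j \<in> set V" and "\<kappa> j = Max (\<kappa> ` set V)"
      by (metis imageE)
    then have j_max: "\<forall>i\<in>set V. \<kappa> i \<le> \<kappa> j"
      by simp
    have sum_remove: "sum f (set V) = f j + sum f (set V - {j})" for f :: "nat \<Rightarrow> nat"
      using jV by (simp add: sum.remove)
    show ?thesis
    proof (rule monomials_in_hideal_step[OF less.prems(1) jV j_max \<kappa>2[OF jV]])
      let ?\<kappa>' = "\<kappa>(j := \<kappa> j - 1)"
      have "sum ?\<kappa>' (set V) < sum \<kappa> (set V)"
        using sum_remove[of \<kappa>] sum_remove[of ?\<kappa>'] \<kappa>2[OF jV] by simp
      moreover have "\<forall>i\<in>set V. 1 \<le> ?\<kappa>' i \<and> ?\<kappa>' i \<le> R"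
        using less.prems(2) \<kappa>2[OF jV] by auto
      ultimately show "monomials_in_hideal V ?\<kappa>' R"
        using less.hyps less.prems(1) by blast
      show "monomials_in_hideal (removeAll j V) \<kappa> R"
        using less.hyps[of \<kappa> "removeAll j V"] less.prems sum_remove \<kappa>2[OF jV] by (simp add: distinct_removeAll)
    qed (use less.prems(2) jV in auto)
  qed
qed

lemma homogeneous_in_hideal:
  assumes "distinct V" "\<forall>i\<in>set V. 1 \<le> \<kappa> i \<and> \<kappa> i \<le> R"
    and "homogeneous_in (set V) l f" "degree_threshold V \<kappa> \<le> int l"
  shows "hideal V \<kappa> R l f"
proof -
  have "hideal V \<kappa> R l (Poly_Mapping.single a (Poly_Mapping.lookup f a))" if "a \<in> Poly_Mapping.keys f" for a
    using monomials_in_hideal[OF assms(1,2)] assms(3,4) that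
    unfolding monomials_in_hideal_def homogeneous_in_def monom_deg_def by metis
  then have "hideal V \<kappa> R l (\<Sum>a\<in>Poly_Mapping.keys f. Poly_Mapping.single a (Poly_Mapping.lookup f a))"
    by (rule hideal_sum)
  then show ?thesis
    by (simp only: sum_single_lookup)
qed

lemma hideal_basic_form_in_I_n:
  assumes "1 \<le> r" "r \<le> n"
  shows "hideal [r..<Suc n] (\<lambda>_. r) r d p \<Longrightarrow> basic_form {r..n} p \<in> I_n n"
proof (induction rule: hideal.induct)
  case (gen i k)
  let ?Y = "[r..<Suc n]"
  have Y: "set ?Y = {r..n}"
    by auto
  have "vars (complete_hom ?Y r) \<subseteq> {r..n}"
    using vars_complete_hom[of ?Y r] unfolding Y .
  then have "basic_form {r..n} (pdiff i (complete_hom ?Y r)) \<in> I_n n"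
    using complete_hom_upt_in_psum_ideal[OF assms(1) order.refl assms(2)] assms gen(1) Y
    by (intro pdiff_basic_form_in_I_n) auto
  moreover have "Suc k = r"
    using gen by simp
  ultimately show ?case
    using pdiff_complete_hom[of ?Y i k] gen(1) by simp
next
  case zero
  show ?case
    unfolding I_n_def basic_form_def by (simp add: gen_ideal.zero)
next
  case (add d p q)
  have "basic_form {r..n} (p + q) = (\<lambda>U. basic_form {r..n} p U + basic_form {r..n} q U)"
    by (auto simp: basic_form_def)
  then show ?case
    using add unfolding I_n_def by (simp add: gen_ideal.add)
next
  case (mon d p a c)
  have "basic_form {r..n} (Poly_Mapping.single a c * p) = wedge (zero_form (Poly_Mapping.single a c)) (basic_form {r..n} p)"
    by (subst wedge_zero_form_left) (auto simp: basic_form_def)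
  moreover have "zero_form (Poly_Mapping.single a c) \<in> Omega n"
    using mon(2) vars_single[of a c] assms by (intro zero_form_in_Omega) auto
  ultimately show ?case
    using mon(3) unfolding I_n_def by (simp add: gen_ideal.lmult)
qed

theorem corollary19:
  fixes n r l :: nat and f :: mpoly
  assumes "1 \<le> r" and "r \<le> n"
    and "homogeneous_in {r..n} l f"
    and "int l > (int r - 2) * (int n - int r + 1)"
  shows "(\<lambda>S. if S = {r..n} then f else 0) \<in> I_n n"
proof -
  let ?Y = "[r..<Suc n]"
  have Y: "set ?Y = {r..n}"
    by auto
  have "degree_threshold ?Y (\<lambda>_. r) = (int r - 2) * (int n - int r + 1) + 1"
    using assms(2) by (simp add: degree_threshold_def of_nat_diff)
  then have "hideal ?Y (\<lambda>_. r) r l f"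
    using assms by (intro homogeneous_in_hideal) (simp_all only: Y distinct_upt, auto)
  then show ?thesis
    using hideal_basic_form_in_I_n[OF assms(1,2)] unfolding basic_form_def by blast
qed

end
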